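(* Let $n\ge2$, $N=\binom n2$. Let $T_{\Delta_n}$ be a uniformly random standard Young tableau of shape $\Delta_n$, let $P_1<\dots<P_N$ be the order statistics of $N$ i.i.d. Uniform$[0,1]$ random variables independent of $T_{\Delta_n}$, and let $\mathcal T_{\Delta_n}$ be obtained from $T_{\Delta_n}$ by replacing each entry $r$ by $P_r$ (so $\mathcal T_{\Delta_n}$ is a uniformly random Poissonized Young tableau of shape $\Delta_n$). Fix integers $(l,m)$ with $l\ge2$, $1\le m\le\lfloor l/2\rfloor$ (rotated coordinates). Then for every $\delta>0$, $$n^{1-\delta}\Big|\mathcal T_{\Delta_n}(l,m)-\frac{T_{\Delta_n}(l,m)}{N}\Big|\longrightarrow0\quad\text{in probability as }n\to\infty.$$
   Context: $\Delta_n$ is the Young diagram with row lengths $n-i$, $i=1,\dots,n-1$. A standard Young tableau of shape $\lambda$ is a filling of the boxes by $1,\dots,|\lambda|$ strictly increasing along rows and columns. Rotated coordinates: box $(i,j)$ has coordinates $l=n-i+j$, $m=\frac{n-i-j}{2}+1$ if $n-i-j$ is even and $m=\frac{n-i-j+1}{2}$ if odd; $T(l,m)$ is the entry of that box. *)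

theory Defs
  imports "HOL-Probability.Probability"
begin

text \<open>Boxes are pairs (i,j): row i, column j, both 1-based.
  The staircase shape Delta_n has rows i = 1..n-1 of length n-i.\<close>
definition delta_shape :: "nat \<Rightarrow> (nat \<times> nat) set" where
  "delta_shape n = {(i, j). 1 \<le> i \<and> i \<le> n - 1 \<and> 1 \<le> j \<and> j \<le> n - i}"

definition tri_N :: "nat \<Rightarrow> nat" where
  "tri_N n = n choose 2"

definition SYT :: "(nat \<times> nat) set \<Rightarrow> (nat \<times> nat \<Rightarrow> nat) set" where
  "SYT sh = {T. bij_betw T sh {1..card sh}
     \<and> (\<forall>i j. (i, j) \<in> sh \<and> (i, j + 1) \<in> sh \<longrightarrow> T (i, j) < T (i, j + 1))
     \<and> (\<forall>i j. (i, j) \<in> sh \<and> (i + 1, j) \<in> sh \<longrightarrow> T (i, j) < T (i + 1, j))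
     \<and> (\<forall>b. b \<notin> sh \<longrightarrow> T b = 0)}"

definition rot_coord :: "nat \<Rightarrow> nat \<times> nat \<Rightarrow> nat \<times> nat" where
  "rot_coord n b = (case b of (i, j) \<Rightarrow>
     (n - i + j,
      if even (n - i - j) then (n - i - j) div 2 + 1 else (n - i - j + 1) div 2))"

text \<open>The box of Delta_n having rotated coordinates (l,m), so that T(l,m) = T (rot_box n l m).\<close>
definition rot_box :: "nat \<Rightarrow> nat \<Rightarrow> nat \<Rightarrow> nat \<times> nat" where
  "rot_box n l m = (THE b. b \<in> delta_shape n \<and> rot_coord n b = (l, m))"

text \<open>Order statistics P_1 < ... < P_N of U_0, ..., U_{N-1} (P_r is the r-th smallest, 1-based).\<close>
definition order_stat :: "nat \<Rightarrow> (nat \<Rightarrow> real) \<Rightarrow> nat \<Rightarrow> real" where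
  "order_stat N U r = sort (map U [0..<N]) ! (r - 1)"

definition joint_space :: "nat \<Rightarrow> ((nat \<times> nat \<Rightarrow> nat) \<times> (nat \<Rightarrow> real)) measure" where
  "joint_space n = measure_pmf (pmf_of_set (SYT (delta_shape n)))
     \<Otimes>\<^sub>M (\<Pi>\<^sub>M k\<in>{..<tri_N n}. uniform_measure lborel {0..1::real})"

definition poissonized :: "nat \<Rightarrow> (nat \<times> nat \<Rightarrow> nat) \<Rightarrow> (nat \<Rightarrow> real) \<Rightarrow> nat \<times> nat \<Rightarrow> real" where
  "poissonized n T U b = order_stat (tri_N n) U (T b)"

end

theory Submission
  imports Defs "HOL-Real_Asymp.Real_Asymp"
begin

(* Fix a box b and write N = n choose 2, r = T b <= N. Since P_r is the r-th smallest of N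
   uniform samples, P_r > r/N + t forces fewer than r samples below r/N + t, i.e. the empirical
   count at r/N + t falls N t short of its mean; symmetrically for P_r < r/N - t. Hoeffding's
   inequality bounds both events by exp (-2 N t^2) whatever r is, so the same bound holds after
   averaging over the independent tableau T. With N ~ n^2/2 and t = eps / n^(1 - delta) the
   bound is of order exp (-eps^2 n^(2 delta)), which tends to 0. *)

lemma sorted_nth_le_iff_less_length_filter:
  fixes xs :: "'a::linorder list"
  assumes "sorted xs" "k < length xs"
  shows "xs ! k \<le> x \<longleftrightarrow> k < length (filter (\<lambda>y. y \<le> x) xs)"
  using assms
proof (induction xs arbitrary: k)
  case Nil
  then show ?case by simp
next
  case (Cons a xs)
  show ?case
  proof (cases "a \<le> x")
    case True
    then show ?thesis using Cons by (cases k) auto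
  next
    case False
    with Cons.prems have "filter (\<lambda>y. y \<le> x) xs = []" and "a \<le> (a # xs) ! k"
      by (auto simp: filter_empty_conv nth_Cons split: nat.split)
    with False show ?thesis by auto
  qed
qed

lemma nth_beyond_length: "length xs \<le> n \<Longrightarrow> xs ! n = [] ! (n - length xs)"
  by (induction xs arbitrary: n) (auto simp: nth_Cons split: nat.split)

definition uniform_cube :: "nat \<Rightarrow> (nat \<Rightarrow> real) measure" where
  "uniform_cube N = (\<Pi>\<^sub>M k\<in>{..<N}. uniform_measure lborel {0..1})"

definition empirical_count :: "nat \<Rightarrow> (nat \<Rightarrow> real) \<Rightarrow> real \<Rightarrow> nat" where
  "empirical_count N U x = card {k. k < N \<and> U k \<le> x}"

lemma prob_space_uniform_unit: "prob_space (uniform_measure lborel {0..1::real})"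
  by (rule prob_space_uniform_measure) auto

lemma prob_space_uniform_cube: "prob_space (uniform_cube N)"
  unfolding uniform_cube_def by (intro prob_space_PiM prob_space_uniform_unit)

lemma measurable_uniform_cube_coord [measurable]:
  "k < N \<Longrightarrow> (\<lambda>U. U k) \<in> measurable (uniform_cube N) (uniform_measure lborel {0..1})"
  unfolding uniform_cube_def by (simp add: measurable_component_singleton)

lemma distr_uniform_cube_coord:
  "k < N \<Longrightarrow> distr (uniform_cube N) (uniform_measure lborel {0..1}) (\<lambda>U. U k)
     = uniform_measure lborel {0..1}"
  unfolding uniform_cube_def by (rule distr_PiM_component) (auto intro: prob_space_uniform_unit)

lemma indep_vars_uniform_cube_coords:
  assumes "N > 0"
  shows "prob_space.indep_vars (uniform_cube N) (\<lambda>_. uniform_measure lborel {0..1})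
           (\<lambda>k U. U k) {..<N}"
proof -
  interpret prob_space "uniform_cube N" by (rule prob_space_uniform_cube)
  have "distr (uniform_cube N) (\<Pi>\<^sub>M k\<in>{..<N}. uniform_measure lborel {0..1}) (\<lambda>U. restrict U {..<N})
      = distr (uniform_cube N) (uniform_cube N) (\<lambda>U. U)"
    by (rule distr_cong) (auto simp: uniform_cube_def space_PiM)
  also have "\<dots> = (\<Pi>\<^sub>M k\<in>{..<N}. distr (uniform_cube N) (uniform_measure lborel {0..1}) (\<lambda>U. U k))"
    unfolding distr_id uniform_cube_def
    by (intro PiM_cong refl distr_PiM_component[symmetric] prob_space_uniform_unit) auto
  finally show ?thesis
    using assms by (subst indep_vars_iff_distr_eq_PiM') auto
qed

lemma AE_uniform_cube_unit: "AE U in uniform_cube N. \<forall>k<N. U k \<in> {0..1}"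
proof -
  have "AE U in uniform_cube N. U k \<in> {0..1}" if "k < N" for k
    using that unfolding uniform_cube_def
    by (intro AE_PiM_component prob_space_uniform_unit AE_uniform_measureI) auto
  then show ?thesis by (subst AE_all_countable) auto
qed

lemma expectation_uniform_cube_indicator:
  assumes "k < N" "0 \<le> x" "x \<le> 1"
  shows "prob_space.expectation (uniform_cube N) (\<lambda>U. indicator {..x} (U k) :: real) = x"
proof -
  have "prob_space.expectation (uniform_cube N) (\<lambda>U. indicator {..x} (U k) :: real)
      = integral\<^sup>L (distr (uniform_cube N) (uniform_measure lborel {0..1}) (\<lambda>U. U k)) (indicator {..x})"
    using assms by (intro integral_distr[symmetric]) auto
  also have "\<dots> = integral\<^sup>L (uniform_measure lborel {0..1}) (indicator {..x})"
    using assms by (simp add: distr_uniform_cube_coord)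
  also have "\<dots> = x"
    using assms by simp
  finally show ?thesis .
qed

lemma real_empirical_count:
  "real (empirical_count N U x) = (\<Sum>k<N. indicator {..x} (U k))"
  by (simp add: empirical_count_def indicator_def sum.If_cases Int_def)

lemma empirical_count_measurable [measurable]:
  "(\<lambda>U. real (empirical_count N U x)) \<in> borel_measurable (uniform_cube N)"
  unfolding real_empirical_count uniform_cube_def by measurable

lemma
  assumes "N > 0" "0 \<le> x" "x \<le> 1" "s \<ge> 0"
  shows empirical_count_lower_tail:
      "measure (uniform_cube N) {U \<in> space (uniform_cube N). real (empirical_count N U x) \<le> N * x - s}
         \<le> exp (- 2 * s\<^sup>2 / real N)" (is ?lower)
    and empirical_count_upper_tail:
      "measure (uniform_cube N) {U \<in> space (uniform_cube N). real (empirical_count N U x) \<ge> N * x + s}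
         \<le> exp (- 2 * s\<^sup>2 / real N)" (is ?upper)
proof -
  interpret prob_space "uniform_cube N" by (rule prob_space_uniform_cube)
  interpret Hoeffding_ineq "uniform_cube N" "{..<N}" "\<lambda>k U. indicator {..x} (U k)"
    "\<lambda>_. 0" "\<lambda>_. 1" "N * x"
  proof unfold_locales
    show "indep_vars (\<lambda>_. borel) (\<lambda>k U. indicator {..x} (U k) :: real) {..<N}"
      using indep_vars_compose2[OF indep_vars_uniform_cube_coords[OF \<open>N > 0\<close>],
          of "\<lambda>_ y. indicator {..x} y :: real"]
      by simp
    show "real N * x \<equiv> (\<Sum>k<N. expectation (\<lambda>U. indicator {..x} (U k)))"
      using assms by (intro eq_reflection) (simp add: expectation_uniform_cube_indicator)
  qed (auto simp: indicator_def)
  have pos: "(\<Sum>k<N. (1 - 0 :: real)\<^sup>2) > 0"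
    using \<open>N > 0\<close> by simp
  show ?lower
    using Hoeffding_ineq_le[OF \<open>s \<ge> 0\<close> pos] by (simp add: real_empirical_count)
  show ?upper
    using Hoeffding_ineq_ge[OF \<open>s \<ge> 0\<close> pos] by (simp add: real_empirical_count)
qed

(* By the truncated subtraction in order_stat, the index r = 0 behaves like r = 1; this case
   is needed because tableaux vanish off their shape. *)
lemma order_stat_le_iff:
  assumes "0 < N" "r \<le> N"
  shows "order_stat N U r \<le> x \<longleftrightarrow> r - 1 < empirical_count N U x"
proof -
  have "length (filter (\<lambda>y. y \<le> x) (sort (map U [0..<N]))) = empirical_count N U x"
    by (auto simp: filter_sort length_filter_conv_card empirical_count_def
        intro!: arg_cong[where f = card])
  then show ?thesis
    using assms unfolding order_stat_def
    by (subst sorted_nth_le_iff_less_length_filter) auto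
qed

lemma order_stat_measurable [measurable]:
  "(\<lambda>U. order_stat N U r) \<in> borel_measurable (uniform_cube N)"
proof (cases "0 < N \<and> r \<le> N")
  case True
  show ?thesis
  proof (rule borel_measurable_iff_le[THEN iffD2], intro allI)
    fix x
    have "{U \<in> space (uniform_cube N). order_stat N U r \<le> x}
        = {U \<in> space (uniform_cube N). real (r - 1) < real (empirical_count N U x)}"
      using True by (simp only: order_stat_le_iff of_nat_less_iff)
    also have "\<dots> \<in> sets (uniform_cube N)"
      by measurable
    finally show "{U \<in> space (uniform_cube N). order_stat N U r \<le> x} \<in> sets (uniform_cube N)" .
  qed
next
  case False
  then have "order_stat N U r = [] ! (r - 1 - N)" for U
    unfolding order_stat_def by (subst nth_beyond_length) auto
  then show ?thesis
    by simp
qed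

lemma AE_order_stat_unit:
  assumes "0 < N" "r \<le> N"
  shows "AE U in uniform_cube N. order_stat N U r \<in> {0..1}"
  using AE_uniform_cube_unit
proof eventually_elim
  case (elim U)
  have "order_stat N U r \<in> set (sort (map U [0..<N]))"
    using assms unfolding order_stat_def by (intro nth_mem) auto
  with elim show ?case by auto
qed

lemma order_stat_upper_tail:
  assumes "0 < N" "r \<le> N" "t > 0"
  shows "measure (uniform_cube N) {U \<in> space (uniform_cube N). order_stat N U r > r / N + t}
           \<le> exp (- 2 * real N * t\<^sup>2)"
proof -
  interpret prob_space "uniform_cube N" by (rule prob_space_uniform_cube)
  define x where "x = r / N + t"
  show ?thesis
  proof (cases "x < 1")
    case True
    have "{U \<in> space (uniform_cube N). order_stat N U r > x}
        \<subseteq> {U \<in> space (uniform_cube N). real (empirical_count N U x) \<le> N * x - N * t}"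
    proof safe
      fix U assume "x < order_stat N U r"
      then have "empirical_count N U x \<le> r - 1"
        using order_stat_le_iff[OF assms(1,2)] by (meson not_le not_less)
      then show "real (empirical_count N U x) \<le> N * x - N * t"
        using assms by (simp add: x_def field_simps)
    qed
    then have "prob {U \<in> space (uniform_cube N). order_stat N U r > x}
        \<le> prob {U \<in> space (uniform_cube N). real (empirical_count N U x) \<le> N * x - N * t}"
      by (rule finite_measure_mono) measurable
    also have "\<dots> \<le> exp (- 2 * (real N * t)\<^sup>2 / real N)"
      using assms True by (intro empirical_count_lower_tail) (auto simp: x_def)
    also have "\<dots> = exp (- 2 * real N * t\<^sup>2)"
      using \<open>0 < N\<close> by (simp add: power2_eq_square)
    finally show ?thesis
      by (simp only: x_def)
  next
    case False
    have "AE U in uniform_cube N. \<not> order_stat N U r > x"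
      using AE_order_stat_unit[OF assms(1,2)] by eventually_elim (use False in auto)
    then have "prob {U \<in> space (uniform_cube N). order_stat N U r > x} = 0"
      by (subst prob_eq_0) auto
    then show ?thesis
      by (simp add: x_def)
  qed
qed

lemma order_stat_lower_tail:
  assumes "0 < N" "r \<le> N" "t > 0"
  shows "measure (uniform_cube N) {U \<in> space (uniform_cube N). order_stat N U r < r / N - t}
           \<le> exp (- 2 * real N * t\<^sup>2)"
proof -
  interpret prob_space "uniform_cube N" by (rule prob_space_uniform_cube)
  have "real r / real N \<le> 1"
    using assms by (simp add: divide_le_eq_1)
  define x where "x = r / N - t"
  have "x \<le> 1"
    using \<open>real r / real N \<le> 1\<close> \<open>t > 0\<close> unfolding x_def by linarith
  show ?thesis
  proof (cases "0 < x")
    case True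
    have "{U \<in> space (uniform_cube N). order_stat N U r < x}
        \<subseteq> {U \<in> space (uniform_cube N). real (empirical_count N U x) \<ge> N * x + N * t}"
    proof safe
      fix U assume "order_stat N U r < x"
      then have "r \<le> empirical_count N U x"
        using order_stat_le_iff[OF assms(1,2), of U x] by simp
      then show "real (empirical_count N U x) \<ge> N * x + N * t"
        using assms by (simp add: x_def field_simps)
    qed
    then have "prob {U \<in> space (uniform_cube N). order_stat N U r < x}
        \<le> prob {U \<in> space (uniform_cube N). real (empirical_count N U x) \<ge> N * x + N * t}"
      by (rule finite_measure_mono) measurable
    also have "\<dots> \<le> exp (- 2 * (real N * t)\<^sup>2 / real N)"
      using assms True \<open>x \<le> 1\<close> by (intro empirical_count_upper_tail) auto
    also have "\<dots> = exp (- 2 * real N * t\<^sup>2)"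
      using \<open>0 < N\<close> by (simp add: power2_eq_square)
    finally show ?thesis
      by (simp only: x_def)
  next
    case False
    have "AE U in uniform_cube N. \<not> order_stat N U r < x"
      using AE_order_stat_unit[OF assms(1,2)] by eventually_elim (use False in auto)
    then have "prob {U \<in> space (uniform_cube N). order_stat N U r < x} = 0"
      by (subst prob_eq_0) auto
    then show ?thesis
      by (simp add: x_def)
  qed
qed

lemma order_stat_deviation:
  assumes "0 < N" "r \<le> N" "t > 0"
  shows "measure (uniform_cube N) {U \<in> space (uniform_cube N). \<bar>order_stat N U r - r / N\<bar> > t}
           \<le> 2 * exp (- 2 * real N * t\<^sup>2)"
proof -
  interpret prob_space "uniform_cube N" by (rule prob_space_uniform_cube)
  have "{U \<in> space (uniform_cube N). \<bar>order_stat N U r - r / N\<bar> > t}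
      = {U \<in> space (uniform_cube N). order_stat N U r > r / N + t}
        \<union> {U \<in> space (uniform_cube N). order_stat N U r < r / N - t}"
    by auto
  then have "prob {U \<in> space (uniform_cube N). \<bar>order_stat N U r - r / N\<bar> > t}
      \<le> prob {U \<in> space (uniform_cube N). order_stat N U r > r / N + t}
        + prob {U \<in> space (uniform_cube N). order_stat N U r < r / N - t}"
    by (simp only:) (intro measure_Un_le; measurable)
  also have "\<dots> \<le> 2 * exp (- 2 * real N * t\<^sup>2)"
    using order_stat_upper_tail[OF assms] order_stat_lower_tail[OF assms] by simp
  finally show ?thesis .
qed

lemma measure_pair_pmf_le:
  fixes p :: "'a pmf"
  assumes "prob_space M" "A \<in> sets (measure_pmf p \<Otimes>\<^sub>M M)"
    and bound: "\<And>x. x \<in> set_pmf p \<Longrightarrow> measure M (Pair x -` A) \<le> c"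
  shows "measure (measure_pmf p \<Otimes>\<^sub>M M) A \<le> c"
proof -
  interpret M: prob_space M by fact
  interpret PM: prob_space "measure_pmf p \<Otimes>\<^sub>M M"
    by (intro prob_space_pair measure_pmf.prob_space_axioms M.prob_space_axioms)
  obtain x where "x \<in> set_pmf p"
    using set_pmf_not_empty[of p] by blast
  then have "0 \<le> c"
    using bound[of x] measure_nonneg order_trans by blast
  have "emeasure (measure_pmf p \<Otimes>\<^sub>M M) A = (\<integral>\<^sup>+x. emeasure M (Pair x -` A) \<partial>measure_pmf p)"
    using assms(2) by (rule M.emeasure_pair_measure_alt)
  also have "\<dots> \<le> (\<integral>\<^sup>+x. ennreal c \<partial>measure_pmf p)"
    using bound
    by (intro nn_integral_mono_AE) (auto simp: AE_measure_pmf_iff M.emeasure_eq_measure intro!: ennreal_leI)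
  also have "\<dots> = ennreal c"
    by (simp add: measure_pmf.emeasure_space_1)
  finally show ?thesis
    using \<open>0 \<le> c\<close> by (simp add: PM.emeasure_eq_measure)
qed

lemma pmf_pair_order_stat_deviation:
  fixes p :: "'a pmf" and f :: "'a \<Rightarrow> nat"
  assumes "0 < N" "t > 0" "\<And>x. x \<in> set_pmf p \<Longrightarrow> f x \<le> N"
  shows "measure (measure_pmf p \<Otimes>\<^sub>M uniform_cube N)
           {(x, U) \<in> space (measure_pmf p \<Otimes>\<^sub>M uniform_cube N). \<bar>order_stat N U (f x) - f x / N\<bar> > t}
         \<le> 2 * exp (- 2 * real N * t\<^sup>2)"
proof (rule measure_pair_pmf_le)
  let ?M = "measure_pmf p \<Otimes>\<^sub>M uniform_cube N"
  show "prob_space (uniform_cube N)"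
    by (rule prob_space_uniform_cube)
  have index [measurable]: "(\<lambda>z. f (fst z)) \<in> measurable ?M (count_space UNIV)"
    by (rule measurable_compose[OF measurable_fst]) simp
  have [measurable]: "(\<lambda>z. order_stat N (snd z) (f (fst z))) \<in> borel_measurable ?M"
    by (rule measurable_compose_countable[OF _ index]) measurable
  have [measurable]: "(\<lambda>z. real (f (fst z)) / real N) \<in> borel_measurable ?M"
    by (rule measurable_compose[OF index]) simp
  have "{(x, U) \<in> space ?M. \<bar>order_stat N U (f x) - f x / N\<bar> > t}
      = {z \<in> space ?M. \<bar>order_stat N (snd z) (f (fst z)) - real (f (fst z)) / real N\<bar> > t}"
    by auto
  also have "\<dots> \<in> sets ?M"
    by measurable
  finally show "{(x, U) \<in> space ?M. \<bar>order_stat N U (f x) - f x / N\<bar> > t} \<in> sets ?M" .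
  fix x assume "x \<in> set_pmf p"
  then show "measure (uniform_cube N)
      (Pair x -` {(x, U) \<in> space ?M. \<bar>order_stat N U (f x) - f x / N\<bar> > t})
      \<le> 2 * exp (- 2 * real N * t\<^sup>2)"
    using order_stat_deviation[OF \<open>0 < N\<close> assms(3) \<open>t > 0\<close>] by (simp add: space_pair_measure)
qed

lemma card_key_le_strict_mono:
  fixes key :: "'a \<Rightarrow> 'b::linorder"
  assumes "finite A" "b \<in> A" "c \<in> A" "key b < key c"
  shows "card {a \<in> A. key a \<le> key b} < card {a \<in> A. key a \<le> key c}"
proof (rule psubset_card_mono)
  show "finite {a \<in> A. key a \<le> key c}"
    using \<open>finite A\<close> by simp
  have "{a \<in> A. key a \<le> key b} \<subseteq> {a \<in> A. key a \<le> key c}"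
    using assms by auto
  moreover have "c \<in> {a \<in> A. key a \<le> key c} - {a \<in> A. key a \<le> key b}"
    using assms by auto
  ultimately show "{a \<in> A. key a \<le> key b} \<subset> {a \<in> A. key a \<le> key c}"
    by blast
qed

lemma bij_betw_card_key_le:
  fixes key :: "'a \<Rightarrow> 'b::linorder"
  assumes "finite A" "inj_on key A"
  shows "bij_betw (\<lambda>b. card {a \<in> A. key a \<le> key b}) A {1..card A}"
proof -
  let ?rank = "\<lambda>b. card {a \<in> A. key a \<le> key b}"
  have inj: "inj_on ?rank A"
  proof (rule inj_onI)
    fix b c assume "b \<in> A" "c \<in> A" "?rank b = ?rank c"
    then have "key b = key c"
      using card_key_le_strict_mono[OF \<open>finite A\<close>, of b c key]
        card_key_le_strict_mono[OF \<open>finite A\<close>, of c b key]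
      by (cases "key b" "key c" rule: linorder_cases) auto
    then show "b = c"
      using \<open>inj_on key A\<close> \<open>b \<in> A\<close> \<open>c \<in> A\<close> by (auto dest: inj_onD)
  qed
  have "?rank ` A \<subseteq> {1..card A}"
  proof (rule image_subsetI)
    fix b assume "b \<in> A"
    then have "b \<in> {a \<in> A. key a \<le> key b}"
      by simp
    then show "?rank b \<in> {1..card A}"
      using \<open>finite A\<close> by (auto simp: Suc_le_eq card_gt_0_iff intro: card_mono)
  qed
  moreover have "card (?rank ` A) = card {1..card A}"
    using card_image[OF inj] by simp
  ultimately have "?rank ` A = {1..card A}"
    by (intro card_subset_eq) auto
  with inj show ?thesis
    by (simp add: bij_betw_def)
qed

lemma SYT_nonempty:
  assumes "finite sh"
  shows "SYT sh \<noteq> {}"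
proof -
  define K where "K = Suc (Max (snd ` sh))"
  have column_bound: "j < K" if "(i, j) \<in> sh" for i j
    using that assms unfolding K_def by (simp add: le_imp_less_Suc rev_image_eqI)
  define key where "key = (\<lambda>(i, j). i * K + j)"
  have "inj_on key sh"
  proof (rule inj_onI, clarify)
    fix i j i' j' assume "(i, j) \<in> sh" "(i', j') \<in> sh" and eq: "key (i, j) = key (i', j')"
    then have "j < K" "j' < K"
      by (auto intro: column_bound)
    then have "(i * K + j) div K = i" "(i * K + j) mod K = j"
        "(i' * K + j') div K = i'" "(i' * K + j') mod K = j'"
      by auto
    with eq show "i = i' \<and> j = j'"
      unfolding key_def by (metis case_prod_conv)
  qed
  define T where "T = (\<lambda>b. if b \<in> sh then card {a \<in> sh. key a \<le> key b} else 0)"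
  have "T \<in> SYT sh"
    unfolding SYT_def
  proof (intro CollectI conjI allI impI)
    show "bij_betw T sh {1..card sh}"
      using bij_betw_card_key_le[OF assms \<open>inj_on key sh\<close>]
      by (rule bij_betw_cong[THEN iffD1, rotated]) (simp add: T_def)
  next
    fix i j assume "(i, j) \<in> sh \<and> (i, j + 1) \<in> sh"
    then show "T (i, j) < T (i, j + 1)"
      using card_key_le_strict_mono[OF assms, of "(i, j)" "(i, j + 1)" key]
      by (simp add: T_def key_def)
  next
    fix i j assume "(i, j) \<in> sh \<and> (i + 1, j) \<in> sh"
    then show "T (i, j) < T (i + 1, j)"
      using card_key_le_strict_mono[OF assms, of "(i, j)" "(i + 1, j)" key] column_bound[of i j]
      by (simp add: T_def key_def)
  qed (simp add: T_def)
  then show ?thesis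
    by blast
qed

lemma finite_SYT:
  assumes "finite sh"
  shows "finite (SYT sh)"
proof (rule finite_subset)
  show "SYT sh \<subseteq> {T. \<forall>b. (b \<in> sh \<longrightarrow> T b \<in> {1..card sh}) \<and> (b \<notin> sh \<longrightarrow> T b = 0)}"
    unfolding SYT_def bij_betw_def by auto
  show "finite {T. \<forall>b. (b \<in> sh \<longrightarrow> T b \<in> {1..card sh}) \<and> (b \<notin> sh \<longrightarrow> T b = 0)}"
    using assms by (intro finite_set_of_finite_funs) auto
qed

lemma SYT_le_card:
  assumes "T \<in> SYT sh"
  shows "T b \<le> card sh"
  using assms unfolding SYT_def bij_betw_def by (cases "b \<in> sh"; cases b) auto

lemma delta_shape_eq_Sigma: "delta_shape n = (SIGMA i:{1..n - 1}. {1..n - i})"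
  unfolding delta_shape_def by auto

lemma finite_delta_shape: "finite (delta_shape n)"
  by (simp add: delta_shape_eq_Sigma)

lemma sum_lessThan_eq_choose_two: "(\<Sum>i<n. i) = n choose 2"
  by (induction n) (simp_all add: numeral_2_eq_2)

lemma card_delta_shape: "card (delta_shape n) = tri_N n"
proof -
  have "card (delta_shape n) = (\<Sum>i=1..n - 1. n - i)"
    by (simp add: delta_shape_eq_Sigma)
  also have "\<dots> = (\<Sum>i<n. i)"
    by (rule sum.reindex_bij_witness_not_neutral[where i = "\<lambda>k. n - k" and j = "\<lambda>k. n - k"
          and S' = "{}" and T' = "{0}"]) auto
  also have "\<dots> = tri_N n"
    by (simp add: tri_N_def sum_lessThan_eq_choose_two)
  finally show ?thesis .
qed

lemma real_tri_N: "real (tri_N n) = real n * (real n - 1) / 2"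
  by (cases n) (auto simp: tri_N_def choose_two of_nat_diff field_simps real_of_nat_div)

lemma SYT_delta_shape_le_tri_N: "T \<in> SYT (delta_shape n) \<Longrightarrow> T b \<le> tri_N n"
  using SYT_le_card card_delta_shape by metis

lemma joint_space_deviation:
  assumes "2 \<le> n" "t > 0"
  shows "measure (joint_space n)
           {(T, U) \<in> space (joint_space n). \<bar>poissonized n T U b - real (T b) / real (tri_N n)\<bar> > t}
         \<le> 2 * exp (- 2 * real (tri_N n) * t\<^sup>2)"
proof -
  have "0 < tri_N n"
    using assms by (simp add: tri_N_def)
  moreover have "set_pmf (pmf_of_set (SYT (delta_shape n))) = SYT (delta_shape n)"
    by (simp add: finite_SYT finite_delta_shape SYT_nonempty)
  ultimately show ?thesis
    using pmf_pair_order_stat_deviation[of "tri_N n" t "pmf_of_set (SYT (delta_shape n))" "\<lambda>T. T b"]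
      assms
    unfolding joint_space_def poissonized_def uniform_cube_def
    by (simp add: SYT_delta_shape_le_tri_N)
qed

theorem lemma3p3:
  fixes l m :: nat and \<delta> \<epsilon> :: real
  assumes "l \<ge> 2" and "1 \<le> m" and "m \<le> l div 2" and "\<delta> > 0" and "\<epsilon> > 0"
  shows "(\<lambda>n. measure (joint_space n)
            {(T, U) \<in> space (joint_space n).
               real n powr (1 - \<delta>) *
               \<bar>poissonized n T U (rot_box n l m) - real (T (rot_box n l m)) / real (tri_N n)\<bar>
               > \<epsilon>}) \<longlonglongrightarrow> 0"
proof (rule Lim_null_comparison)
  define bound where "bound n = 2 * exp (- 2 * real (tri_N n) * (\<epsilon> / real n powr (1 - \<delta>))\<^sup>2)" for n
  show "\<forall>\<^sub>F n in sequentially. norm (measure (joint_space n)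
            {(T, U) \<in> space (joint_space n).
               real n powr (1 - \<delta>) *
               \<bar>poissonized n T U (rot_box n l m) - real (T (rot_box n l m)) / real (tri_N n)\<bar>
               > \<epsilon>}) \<le> bound n"
    using eventually_ge_at_top[of 2]
  proof eventually_elim
    case (elim n)
    have "0 < real n powr (1 - \<delta>)"
      using elim by simp
    then have "(\<epsilon> < real n powr (1 - \<delta>) * d) \<longleftrightarrow> (\<epsilon> / real n powr (1 - \<delta>) < d)" for d
      by (simp add: pos_divide_less_eq mult.commute)
    then show ?case
      using joint_space_deviation[OF elim, of "\<epsilon> / real n powr (1 - \<delta>)"] \<open>\<epsilon> > 0\<close>
        \<open>0 < real n powr (1 - \<delta>)\<close>
      by (simp add: bound_def)
  qed
  show "bound \<longlonglongrightarrow> 0"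
    unfolding bound_def real_tri_N using assms by real_asymp
qed

end
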